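(* Let $n\geq 2$ be an integer and let $A$ be a real square matrix of order $n$ of the form $$A=\begin{pmatrix}1& -a_{12}&\cdots&-a_{1,n-1}&-a_{1n}\\ 0&1& \cdots&-a_{2,n-1}&-a_{2n}\\ \vdots&\vdots&\ddots&\vdots&\vdots\\ 0&0&\cdots&1&-a_{n-1,n}\\ a_1&a_2&\cdots&a_{n-1}&a_n\end{pmatrix},$$ i.e. the first $n-1$ rows form an upper unitriangular block whose entries strictly above the diagonal are $-a_{ij}$ ($1\le i<j\le n$), and the last row is $(a_1,\dots,a_n)$, where $a_{ij}\geq 0$ for all $1\leq i<j\leq n$, $a_i\geq 0$ for all $i=1,\ldots,n-1$, and $a_n>0$. Then $\det(A)>0$. *)

theory Defs
  imports "Jordan_Normal_Form.Determinant"
begin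

text \<open>The matrix of the lemma, with 0-based indices: row i (for i < n-1) has 1 on the
diagonal, -a i j strictly above it and 0 below; the last row (i = n-1) is b 0, ..., b (n-1).\<close>
definition lemma_mat :: "nat \<Rightarrow> (nat \<Rightarrow> nat \<Rightarrow> real) \<Rightarrow> (nat \<Rightarrow> real) \<Rightarrow> real mat" where
  "lemma_mat n a b = mat n n (\<lambda>(i, j).
     if i = n - 1 then b j
     else if i = j then 1
     else if i < j then - a i j
     else 0)"

end

theory Submission
  imports Defs
begin

text \<open>Subtracting b 0 times the first row from the last row clears the first column below
  the diagonal entry 1. Expanding along that column leaves a matrix of the same shape and order
  one less, whose last row is b (j + 1) + b 0 * a 0 (j + 1): its entries stay nonnegative and
  its corner entry stays positive. Induction therefore ends at the 1 \<times> 1 matrix of a positive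
  number.\<close>

lemma det_first_column_zero_below:
  assumes A: "(A :: 'a :: comm_ring_1 mat) \<in> carrier_mat n n" and "0 < n"
    and zero: "\<And>i. 0 < i \<Longrightarrow> i < n \<Longrightarrow> A $$ (i, 0) = 0"
  shows "det A = A $$ (0, 0) * det (mat_delete A 0 0)"
proof -
  have "det A = (\<Sum>i<n. A $$ (i, 0) * cofactor A i 0)"
    using laplace_expansion_column[OF A] \<open>0 < n\<close> .
  also have "\<dots> = (\<Sum>i\<in>{0}. A $$ (i, 0) * cofactor A i 0)"
    by (rule sum.mono_neutral_right) (use \<open>0 < n\<close> zero in auto)
  finally show ?thesis by (simp add: cofactor_def)
qed

lemma det_lemma_mat_1: "det (lemma_mat 1 a b) = b 0"
  by (subst det_single) (auto simp: lemma_mat_def)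

lemma det_lemma_mat_Suc:
  assumes "1 \<le> k"
  shows "det (lemma_mat (Suc k) a b) =
    det (lemma_mat k (\<lambda>i j. a (Suc i) (Suc j)) (\<lambda>j. b (Suc j) + b 0 * a 0 (Suc j)))"
proof -
  let ?A = "lemma_mat (Suc k) a b"
  let ?B = "addrow (- b 0) k 0 ?A"
  have A: "?A \<in> carrier_mat (Suc k) (Suc k)" by (simp add: lemma_mat_def)
  have "det ?A = det ?B"
    using det_addrow[OF _ _ A] assms by simp
  also have "\<dots> = det (mat_delete ?B 0 0)"
    using det_first_column_zero_below[of ?B "Suc k"] A assms by (simp add: lemma_mat_def)
  also have "mat_delete ?B 0 0 =
      lemma_mat k (\<lambda>i j. a (Suc i) (Suc j)) (\<lambda>j. b (Suc j) + b 0 * a 0 (Suc j))"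
    using assms by (intro eq_matI) (auto simp: mat_delete_def lemma_mat_def)
  finally show ?thesis .
qed

lemma det_lemma_mat_pos:
  assumes "1 \<le> n"
    and "\<And>i j. i < j \<Longrightarrow> j < n \<Longrightarrow> a i j \<ge> 0"
    and "\<And>i. i < n - 1 \<Longrightarrow> b i \<ge> 0"
    and "b (n - 1) > 0"
  shows "det (lemma_mat n a b) > 0"
  using assms
proof (induction n arbitrary: a b rule: nat_induct_at_least)
  case base
  then show ?case using det_lemma_mat_1[of a b] by simp
next
  case (Suc k)
  show ?case unfolding det_lemma_mat_Suc[OF \<open>1 \<le> k\<close>]
  proof (rule Suc.IH)
    show "0 \<le> a (Suc i) (Suc j)" if "i < j" "j < k" for i j
      using Suc.prems(1)[of "Suc i" "Suc j"] that by simp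
    show "0 \<le> b (Suc i) + b 0 * a 0 (Suc i)" if "i < k - 1" for i
      using Suc.prems(1)[of 0 "Suc i"] Suc.prems(2)[of "Suc i"] Suc.prems(2)[of 0] that
      by simp
    show "0 < b (Suc (k - 1)) + b 0 * a 0 (Suc (k - 1))"
      using Suc.prems(1)[of 0 k] Suc.prems(2)[of 0] Suc.prems(3) \<open>1 \<le> k\<close>
      by (simp add: add_pos_nonneg)
  qed
qed

theorem lemma2p5:
  fixes n :: nat and a :: "nat \<Rightarrow> nat \<Rightarrow> real" and b :: "nat \<Rightarrow> real"
  assumes "n \<ge> 2"
    and "\<And>i j. i < j \<Longrightarrow> j < n \<Longrightarrow> a i j \<ge> 0"
    and "\<And>i. i < n - 1 \<Longrightarrow> b i \<ge> 0"
    and "b (n - 1) > 0"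
  shows "det (lemma_mat n a b) > 0"
  using det_lemma_mat_pos[of n a b] assms by simp

end
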